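(* Let $G$ be a Hausdorff topological group and $H$ an extremely amenable closed subgroup of $G$ of finite index. Then $H$ is a normal clopen subgroup of $G$, and $M(G)$ is isomorphic (as a $G$-flow) to the action of $G$ on $G/H$ by left multiplication.
   Context: A $G$-flow is a continuous action of $G$ on a compact Hausdorff space; $M(G)$ denotes the universal minimal $G$-flow (the minimal $G$-flow admitting a continuous $G$-equivariant map onto every minimal $G$-flow, unique up to isomorphism). A topological group $H$ is extremely amenable if every $H$-flow has a fixed point (equivalently $|M(H)|=1$). *)

theory Defs
  imports "HOL-Analysis.Analysis" "HOL-Algebra.Coset"
begin

definition topological_group :: "'g monoid \<Rightarrow> 'g topology \<Rightarrow> bool" where
  "topological_group G T \<longleftrightarrow>
     group G \<and> topspace T = carrier G \<and>
     continuous_map (prod_topology T T) T (\<lambda>(x,y). x \<otimes>\<^bsub>G\<^esub> y) \<and>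
     continuous_map T T (\<lambda>x. inv\<^bsub>G\<^esub> x)"

text \<open>A G-flow: a continuous action act of G on a (nonempty) compact Hausdorff space X.
  Only the values of act on carrier G and topspace X matter.\<close>
definition flow :: "'g monoid \<Rightarrow> 'g topology \<Rightarrow> 'x topology \<Rightarrow> ('g \<Rightarrow> 'x \<Rightarrow> 'x) \<Rightarrow> bool" where
  "flow G T X act \<longleftrightarrow>
     topspace X \<noteq> {} \<and> compact_space X \<and> Hausdorff_space X \<and>
     (\<forall>g\<in>carrier G. \<forall>x\<in>topspace X. act g x \<in> topspace X) \<and>
     (\<forall>x\<in>topspace X. act \<one>\<^bsub>G\<^esub> x = x) \<and>
     (\<forall>g\<in>carrier G. \<forall>h\<in>carrier G. \<forall>x\<in>topspace X.
         act (g \<otimes>\<^bsub>G\<^esub> h) x = act g (act h x)) \<and>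
     continuous_map (prod_topology T X) X (\<lambda>(g,x). act g x)"

definition minimal_flow :: "'g monoid \<Rightarrow> 'g topology \<Rightarrow> 'x topology \<Rightarrow> ('g \<Rightarrow> 'x \<Rightarrow> 'x) \<Rightarrow> bool" where
  "minimal_flow G T X act \<longleftrightarrow>
     flow G T X act \<and>
     (\<forall>Y. closedin X Y \<and> Y \<noteq> {} \<and> (\<forall>g\<in>carrier G. \<forall>y\<in>Y. act g y \<in> Y)
          \<longrightarrow> Y = topspace X)"

definition flow_epi ::
  "'g monoid \<Rightarrow> 'x topology \<Rightarrow> ('g \<Rightarrow> 'x \<Rightarrow> 'x) \<Rightarrow> 'y topology \<Rightarrow> ('g \<Rightarrow> 'y \<Rightarrow> 'y)
     \<Rightarrow> ('x \<Rightarrow> 'y) \<Rightarrow> bool" where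
  "flow_epi G X act Y act' f \<longleftrightarrow>
     continuous_map X Y f \<and> f ` topspace X = topspace Y \<and>
     (\<forall>g\<in>carrier G. \<forall>x\<in>topspace X. f (act g x) = act' g (f x))"

text \<open>X is a universal minimal G-flow (i.e. isomorphic to M(G)), with universality tested
  against minimal G-flows carried by the type 'y (given as the first argument).
  HOL cannot quantify over types inside a formula; in the theorem the type 'y is a
  free (hence arbitrary) type variable.\<close>
definition universal_minimal_flow ::
  "'y itself \<Rightarrow> 'g monoid \<Rightarrow> 'g topology \<Rightarrow> 'x topology \<Rightarrow> ('g \<Rightarrow> 'x \<Rightarrow> 'x) \<Rightarrow> bool" where
  "universal_minimal_flow _ G T X act \<longleftrightarrow>
     minimal_flow G T X act \<and>
     (\<forall>(Y::'y topology) act'. minimal_flow G T Y act' \<longrightarrow> (\<exists>f. flow_epi G X act Y act' f))"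

text \<open>Tested on flows carried by the type 'z (first argument).\<close>
definition extremely_amenable ::
  "'z itself \<Rightarrow> 'g monoid \<Rightarrow> 'g topology \<Rightarrow> 'g set \<Rightarrow> bool" where
  "extremely_amenable _ G T H \<longleftrightarrow>
     (\<forall>(X::'z topology) act. flow (G\<lparr>carrier := H\<rparr>) (subtopology T H) X act \<longrightarrow>
        (\<exists>x\<in>topspace X. \<forall>h\<in>H. act h x = x))"

definition left_cosets :: "'g monoid \<Rightarrow> 'g set \<Rightarrow> 'g set set" where
  "left_cosets G H = (\<lambda>g. g <#\<^bsub>G\<^esub> H) ` carrier G"

definition quotient_topology :: "'a topology \<Rightarrow> ('a \<Rightarrow> 'b) \<Rightarrow> 'b set \<Rightarrow> 'b topology" where
  "quotient_topology T q S =
     topology (\<lambda>U. U \<subseteq> S \<and> openin T {x \<in> topspace T. q x \<in> U})"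

lemma istopology_quotient:
  "istopology (\<lambda>U. U \<subseteq> S \<and> openin T {x \<in> topspace T. q x \<in> U})"
proof -
  have "{x \<in> topspace T. q x \<in> U \<inter> V} = {x \<in> topspace T. q x \<in> U} \<inter> {x \<in> topspace T. q x \<in> V}"
    for U V by auto
  moreover have "{x \<in> topspace T. q x \<in> \<Union>K} = (\<Union>U\<in>K. {x \<in> topspace T. q x \<in> U})"
    for K by auto
  ultimately show ?thesis
    unfolding istopology_def by (auto intro!: openin_Union)
qed

lemma openin_quotient_topology:
  "openin (quotient_topology T q S) U \<longleftrightarrow> U \<subseteq> S \<and> openin T {x \<in> topspace T. q x \<in> U}"
  unfolding quotient_topology_def
  by (simp add: istopology_quotient[of S T q])

definition coset_space :: "'g monoid \<Rightarrow> 'g topology \<Rightarrow> 'g set \<Rightarrow> 'g set topology" where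
  "coset_space G T H = quotient_topology T (\<lambda>g. g <#\<^bsub>G\<^esub> H) (left_cosets G H)"

definition coset_action :: "'g monoid \<Rightarrow> 'g \<Rightarrow> 'g set \<Rightarrow> 'g set" where
  "coset_action G g C = g <#\<^bsub>G\<^esub> C"

end

theory Submission
  imports Defs
begin

text \<open>Since \<open>H\<close> is closed of finite index, its complement is a finite union of closed cosets,
  so \<open>H\<close> is open and \<open>G/H\<close> is a finite discrete \<open>G\<close>-flow, minimal because \<open>G\<close> acts
  transitively. For normality, let \<open>H\<close> act on the finite orbit \<open>H b H\<close>: extreme amenability
  gives a fixed coset, hence \<open>H\<close> fixes \<open>b H\<close>, i.e. \<open>b\<inverse> H b \<subseteq> H\<close>. For universality, an
  \<open>H\<close>-fixed point \<open>y\<^sub>0\<close> of a minimal flow \<open>Y\<close> gives the equivariant map \<open>g H \<mapsto> g y\<^sub>0\<close>;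
  its image is a finite, hence closed, invariant set, so it is all of \<open>Y\<close>.\<close>

no_notation (ASCII) subset_mset (infix \<open><#\<close> 50)

lemma (in group) l_coset_mem_iff:
  assumes "subgroup H G" "a \<in> carrier G"
  shows "x \<in> a <# H \<longleftrightarrow> x \<in> carrier G \<and> inv a \<otimes> x \<in> H"
  using assms by (simp add: subgroup.l_coset_eq_rcong[OF _ is_group] r_congruent_def)

lemma (in group) l_coset_self_mem:
  assumes "subgroup H G" "x \<in> carrier G"
  shows "x \<in> x <# H"
  using assms by (simp add: l_coset_mem_iff subgroup.one_closed)

lemma (in group) l_coset_eq_iff:
  assumes "subgroup H G" "a \<in> carrier G" "b \<in> carrier G"
  shows "a <# H = b <# H \<longleftrightarrow> inv a \<otimes> b \<in> H"
  using assms eq_equiv_class_iff[OF subgroup.equiv_rcong[OF assms(1) is_group]]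
  by (simp add: subgroup.l_coset_eq_rcong[OF _ is_group] r_congruent_def)

lemma left_cosets_eq_quotient:
  fixes G :: "'g monoid" (structure)
  assumes "group G" "subgroup H G"
  shows "left_cosets G H = carrier G // rcong H"
  using assms by (auto simp: left_cosets_def quotient_def subgroup.l_coset_eq_rcong)

lemma l_coset_in_left_cosets:
  fixes G :: "'g monoid" (structure)
  assumes "group G" "subgroup H G" "g \<in> carrier G" "C \<in> left_cosets G H"
  shows "g <# C \<in> left_cosets G H"
proof -
  interpret group G by fact
  obtain a where "a \<in> carrier G" "C = a <# H"
    using assms(4) by (auto simp: left_cosets_def)
  then show ?thesis
    using assms by (auto simp: left_cosets_def lcos_m_assoc subgroup.subset)
qed

lemma left_coset_subset_carrier:
  fixes G :: "'g monoid" (structure)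
  assumes "group G" "subgroup H G" "C \<in> left_cosets G H"
  shows "C \<subseteq> carrier G"
  using assms by (auto simp: left_cosets_def intro: group.l_coset_carrier)

lemma topological_groupD:
  assumes "topological_group G T"
  shows "group G" "topspace T = carrier G"
  using assms unfolding topological_group_def by auto

lemma continuous_map_mult_left:
  assumes "topological_group G T" "a \<in> carrier G"
  shows "continuous_map T T (\<lambda>x. a \<otimes>\<^bsub>G\<^esub> x)"
proof -
  have "continuous_map T (prod_topology T T) (\<lambda>x. (a, x))"
    using assms by (simp add: continuous_map_paired topological_group_def)
  then have "continuous_map T T ((\<lambda>(x, y). x \<otimes>\<^bsub>G\<^esub> y) \<circ> (\<lambda>x. (a, x)))"
    using assms by (intro continuous_map_compose) (auto simp: topological_group_def)
  then show ?thesis by (simp add: o_def)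
qed

lemma continuous_map_mult_right:
  assumes "topological_group G T" "a \<in> carrier G"
  shows "continuous_map T T (\<lambda>x. x \<otimes>\<^bsub>G\<^esub> a)"
proof -
  have "continuous_map T (prod_topology T T) (\<lambda>x. (x, a))"
    using assms by (simp add: continuous_map_paired topological_group_def)
  then have "continuous_map T T ((\<lambda>(x, y). x \<otimes>\<^bsub>G\<^esub> y) \<circ> (\<lambda>x. (x, a)))"
    using assms by (intro continuous_map_compose) (auto simp: topological_group_def)
  then show ?thesis by (simp add: o_def)
qed

lemma l_coset_eq_preimage:
  assumes "topological_group G T" "subgroup H G" "a \<in> carrier G"
  shows "a <#\<^bsub>G\<^esub> H = {x \<in> topspace T. inv\<^bsub>G\<^esub> a \<otimes>\<^bsub>G\<^esub> x \<in> H}"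
  using assms group.l_coset_mem_iff[OF topological_groupD(1)[OF assms(1)]]
  by (auto simp: topological_groupD)

lemma openin_l_coset:
  assumes "topological_group G T" "subgroup H G" "a \<in> carrier G" "openin T H"
  shows "openin T (a <#\<^bsub>G\<^esub> H)"
proof -
  have "inv\<^bsub>G\<^esub> a \<in> carrier G"
    using assms by (simp add: group.inv_closed topological_groupD)
  from openin_continuous_map_preimage[OF continuous_map_mult_left[OF assms(1) this] assms(4)]
  show ?thesis by (simp add: l_coset_eq_preimage[OF assms(1-3)])
qed

lemma closedin_l_coset:
  assumes "topological_group G T" "subgroup H G" "a \<in> carrier G" "closedin T H"
  shows "closedin T (a <#\<^bsub>G\<^esub> H)"
proof -
  have "inv\<^bsub>G\<^esub> a \<in> carrier G"
    using assms by (simp add: group.inv_closed topological_groupD)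
  from closedin_continuous_map_preimage[OF continuous_map_mult_left[OF assms(1) this] assms(4)]
  show ?thesis by (simp add: l_coset_eq_preimage[OF assms(1-3)])
qed

lemma openin_closed_subgroup_of_finite_index:
  fixes G :: "'g monoid" (structure)
  assumes tg: "topological_group G T" and sg: "subgroup H G" and "closedin T H"
    and fin: "finite (left_cosets G H)"
  shows "openin T H"
proof -
  interpret group G using topological_groupD[OF tg] by simp
  have eq: "equiv (carrier G) (rcong H)" by (rule subgroup.equiv_rcong[OF sg is_group])
  have L: "left_cosets G H = carrier G // rcong H" by (rule left_cosets_eq_quotient[OF is_group sg])
  have "H = \<one> <# H" using sg by (simp add: lcos_mult_one subgroup.subset)
  then have HL: "H \<in> left_cosets G H" by (auto simp: left_cosets_def)
  have compl: "topspace T - H = \<Union>(left_cosets G H - {H})"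
  proof (intro equalityI subsetI)
    fix x assume "x \<in> topspace T - H"
    moreover from this obtain C where "C \<in> left_cosets G H" "x \<in> C"
      using Union_quotient[OF eq] topological_groupD(2)[OF tg] unfolding L by blast
    ultimately show "x \<in> \<Union>(left_cosets G H - {H})" by blast
  next
    fix x assume "x \<in> \<Union>(left_cosets G H - {H})"
    then obtain C where C: "C \<in> left_cosets G H" "C \<noteq> H" "x \<in> C" by blast
    then have "C \<inter> H = {}"
      using quotient_disj[OF eq] HL unfolding L by blast
    then show "x \<in> topspace T - H"
      using C Union_quotient[OF eq] topological_groupD(2)[OF tg] unfolding L by blast
  qed
  have "closedin T (\<Union>(left_cosets G H - {H}))"
    using fin closedin_l_coset[OF tg sg _ \<open>closedin T H\<close>]
    by (intro closedin_Union) (auto simp: left_cosets_def)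
  then have "openin T (topspace T - (topspace T - H))"
    by (simp add: compl openin_diff)
  then show ?thesis
    using sg topological_groupD(2)[OF tg] subgroup.subset by (metis Diff_Diff_Int inf.absorb_iff2)
qed

lemma continuous_map_l_coset_projection:
  fixes G :: "'g monoid" (structure)
  assumes tg: "topological_group G T" and sg: "subgroup H G" and oH: "openin T H"
  shows "continuous_map T (discrete_topology (left_cosets G H)) (\<lambda>x. x <#\<^bsub>G\<^esub> H)"
  unfolding continuous_map_def
proof (intro conjI allI impI)
  interpret group G using topological_groupD[OF tg] by simp
  show "(\<lambda>x. x <# H) \<in> topspace T \<rightarrow> topspace (discrete_topology (left_cosets G H))"
    using topological_groupD(2)[OF tg] by (auto simp: left_cosets_def)
  fix U assume "openin (discrete_topology (left_cosets G H)) U"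
  then have U: "U \<subseteq> left_cosets G H" by simp
  have "{x \<in> topspace T. x <# H \<in> U} = \<Union>U"
  proof (intro equalityI subsetI)
    fix x assume "x \<in> {x \<in> topspace T. x <# H \<in> U}"
    then show "x \<in> \<Union>U"
      using l_coset_self_mem[OF sg] topological_groupD(2)[OF tg] by blast
  next
    fix x assume "x \<in> \<Union>U"
    then obtain a where a: "a \<in> carrier G" "a <# H \<in> U" "x \<in> a <# H"
      using U by (auto simp: left_cosets_def)
    then have "a <# H = x <# H" "x \<in> carrier G"
      using l_repr_independence[OF a(3,1) sg] l_coset_carrier[OF a(3,1) sg] by auto
    then show "x \<in> {x \<in> topspace T. x <# H \<in> U}"
      using a(2) topological_groupD(2)[OF tg] by auto
  qed
  moreover have "openin T (\<Union>U)"
    using U openin_l_coset[OF tg sg _ oH] by (auto simp: left_cosets_def)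
  ultimately show "openin T {x \<in> topspace T. x <# H \<in> U}" by simp
qed

lemma coset_space_eq_discrete_topology:
  assumes "topological_group G T" "subgroup H G" "openin T H"
  shows "coset_space G T H = discrete_topology (left_cosets G H)"
  using openin_continuous_map_preimage[OF continuous_map_l_coset_projection[OF assms]]
  by (auto simp: topology_eq coset_space_def openin_quotient_topology)

lemma continuous_map_prod_discrete_topology:
  assumes "\<And>s. s \<in> S \<Longrightarrow> continuous_map X Y (\<lambda>x. f x s)"
  shows "continuous_map (prod_topology X (discrete_topology S)) Y (\<lambda>(x, s). f x s)"
  unfolding continuous_map_def
proof (intro conjI allI impI)
  show "(\<lambda>(x, s). f x s) \<in> topspace (prod_topology X (discrete_topology S)) \<rightarrow> topspace Y"
    using assms continuous_map_funspace by fastforce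
  fix U assume U: "openin Y U"
  have "{p \<in> topspace (prod_topology X (discrete_topology S)). (\<lambda>(x, s). f x s) p \<in> U}
          = (\<Union>s\<in>S. {x \<in> topspace X. f x s \<in> U} \<times> {s})"
    by auto
  moreover have "openin (prod_topology X (discrete_topology S)) ({x \<in> topspace X. f x s \<in> U} \<times> {s})"
    if "s \<in> S" for s
    using openin_continuous_map_preimage[OF assms[OF that] U] that
    by (simp add: openin_prod_Times_iff)
  ultimately show "openin (prod_topology X (discrete_topology S))
      {p \<in> topspace (prod_topology X (discrete_topology S)). (\<lambda>(x, s). f x s) p \<in> U}"
    by auto
qed

lemma continuous_map_coset_action:
  fixes G :: "'g monoid" (structure)
  assumes tg: "topological_group G T" and sg: "subgroup H G" and oH: "openin T H"
  shows "continuous_map (prod_topology T (discrete_topology (left_cosets G H)))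
           (discrete_topology (left_cosets G H)) (\<lambda>(g, C). coset_action G g C)"
proof (rule continuous_map_prod_discrete_topology)
  interpret group G using topological_groupD[OF tg] by simp
  fix C assume "C \<in> left_cosets G H"
  then obtain a where a: "a \<in> carrier G" "C = a <# H" by (auto simp: left_cosets_def)
  have "continuous_map T (discrete_topology (left_cosets G H)) ((\<lambda>x. x <# H) \<circ> (\<lambda>g. g \<otimes> a))"
    using continuous_map_mult_right[OF tg a(1)] continuous_map_l_coset_projection[OF tg sg oH]
    by (rule continuous_map_compose)
  then show "continuous_map T (discrete_topology (left_cosets G H)) (\<lambda>g. coset_action G g C)"
    by (rule continuous_map_eq)
       (use a sg topological_groupD(2)[OF tg] in \<open>auto simp: coset_action_def lcos_m_assoc subgroup.subset\<close>)
qed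

lemma flow_subgroup:
  assumes "flow G T X act" "K \<subseteq> carrier G"
  shows "flow (G\<lparr>carrier := K\<rparr>) (subtopology T K) X act"
proof -
  have "continuous_map (prod_topology (subtopology T K) X) X (\<lambda>(g, x). act g x)"
    using assms(1) unfolding flow_def prod_topology_subtopology(1)
    by (blast intro: continuous_map_from_subtopology)
  moreover have "\<forall>g\<in>K. \<forall>h\<in>K. \<forall>x\<in>topspace X. act (g \<otimes>\<^bsub>G\<^esub> h) x = act g (act h x)"
    using assms unfolding flow_def by blast
  ultimately show ?thesis
    using assms unfolding flow_def by auto
qed

lemma flow_subtopology:
  assumes "flow G T X act" "topspace T = carrier G" "closedin X Y" "Y \<noteq> {}"
    and "\<forall>g\<in>carrier G. \<forall>y\<in>Y. act g y \<in> Y"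
  shows "flow G T (subtopology X Y) act"
proof -
  have "continuous_map (prod_topology T (subtopology X Y)) X (\<lambda>(g, x). act g x)"
    using assms(1) unfolding flow_def prod_topology_subtopology(2)
    by (blast intro: continuous_map_from_subtopology)
  then have "continuous_map (prod_topology T (subtopology X Y)) (subtopology X Y) (\<lambda>(g, x). act g x)"
    using assms(2,5) by (auto simp: continuous_map_in_subtopology)
  moreover have "compact_space (subtopology X Y)"
    using assms(1,3) by (simp add: flow_def closedin_compact_space compact_space_subtopology)
  ultimately show ?thesis
    using assms closedin_subset[OF assms(3)] unfolding flow_def
    by (auto simp: Hausdorff_space_subtopology Int_absorb1)
qed

lemma flow_fixed_point_translate:
  fixes K :: "'g monoid" (structure)
  assumes "flow K T X act" "group K" "x \<in> topspace X" "k \<in> carrier K"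
    and fixed: "\<forall>h\<in>carrier K. act h (act k x) = act k x"
  shows "\<forall>h\<in>carrier K. act h x = x"
proof
  interpret group K by fact
  have act_mult: "act (g \<otimes> h) x = act g (act h x)" if "g \<in> carrier K" "h \<in> carrier K" for g h
    using assms(1,3) that unfolding flow_def by blast
  have x_eq: "x = act k x"
    using act_mult[of "inv k" k] assms(1,3,4) fixed unfolding flow_def by auto
  fix h assume "h \<in> carrier K"
  then show "act h x = x" using fixed x_eq[symmetric] by simp
qed

lemma flow_coset_action:
  fixes G :: "'g monoid" (structure)
  assumes tg: "topological_group G T" and sg: "subgroup H G" and oH: "openin T H"
    and fin: "finite (left_cosets G H)"
  shows "flow G T (discrete_topology (left_cosets G H)) (coset_action G)"
proof -
  interpret group G using topological_groupD[OF tg] by simp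
  have "H \<in> left_cosets G H"
    using sg lcos_mult_one[OF subgroup.subset[OF sg]] by (force simp: left_cosets_def)
  then show ?thesis
    using continuous_map_coset_action[OF tg sg oH] fin
      l_coset_in_left_cosets[OF is_group sg] left_coset_subset_carrier[OF is_group sg]
    unfolding flow_def coset_action_def
    by (auto simp: compact_space_discrete_topology lcos_mult_one lcos_m_assoc)
qed

lemma minimal_flow_coset_action:
  fixes G :: "'g monoid" (structure)
  assumes tg: "topological_group G T" and sg: "subgroup H G" and oH: "openin T H"
    and fin: "finite (left_cosets G H)"
  shows "minimal_flow G T (discrete_topology (left_cosets G H)) (coset_action G)"
  unfolding minimal_flow_def
proof (intro conjI allI impI flow_coset_action[OF assms])
  interpret group G using topological_groupD[OF tg] by simp
  fix Y assume Y: "closedin (discrete_topology (left_cosets G H)) Y \<and> Y \<noteq> {} \<and>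
                   (\<forall>g\<in>carrier G. \<forall>y\<in>Y. coset_action G g y \<in> Y)"
  then obtain C where C: "C \<in> Y" by blast
  then have "C \<in> left_cosets G H" using Y by auto
  then obtain a where a: "a \<in> carrier G" "a <# H \<in> Y"
    using C by (auto simp: left_cosets_def)
  have "b <# H \<in> Y" if "b \<in> carrier G" for b
  proof -
    have "(b \<otimes> inv a) <# (a <# H) = b <# H"
      using a that sg by (simp add: lcos_m_assoc m_assoc subgroup.subset)
    then show ?thesis
      using Y a that unfolding coset_action_def by (metis inv_closed m_closed)
  qed
  then show "Y = topspace (discrete_topology (left_cosets G H))"
    using Y by (auto simp: left_cosets_def)
qed

lemma flow_l_coset_orbit:
  fixes G :: "'g monoid" (structure)
  assumes tg: "topological_group G T" and sg: "subgroup H G" and oH: "openin T H"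
    and fin: "finite (left_cosets G H)"
    and sK: "subgroup K G" and C: "C \<in> left_cosets G H"
  shows "flow (G\<lparr>carrier := K\<rparr>) (subtopology T K)
           (discrete_topology ((\<lambda>k. k <# C) ` K)) (coset_action G)"
proof -
  interpret group G using topological_groupD[OF tg] by simp
  define S where "S = (\<lambda>k. k <# C) ` K"
  have Kc: "K \<subseteq> carrier G" by (rule subgroup.subset[OF sK])
  have SL: "S \<subseteq> left_cosets G H"
    using C Kc l_coset_in_left_cosets[OF is_group sg] by (auto simp: S_def)
  have S_inv: "\<forall>k\<in>carrier (G\<lparr>carrier := K\<rparr>). \<forall>D\<in>S. coset_action G k D \<in> S"
  proof (intro ballI)
    fix k D assume "k \<in> carrier (G\<lparr>carrier := K\<rparr>)" "D \<in> S"
    then obtain k' where k: "k \<in> K" "k' \<in> K" "D = k' <# C"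
      by (auto simp: S_def)
    then have "coset_action G k D = (k \<otimes> k') <# C"
      using Kc left_coset_subset_carrier[OF is_group sg C]
      by (simp add: coset_action_def lcos_m_assoc subsetD)
    then show "coset_action G k D \<in> S"
      using subgroup.m_closed[OF sK k(1,2)] by (simp add: S_def)
  qed
  have "flow (G\<lparr>carrier := K\<rparr>) (subtopology T K)
          (subtopology (discrete_topology (left_cosets G H)) S) (coset_action G)"
    using SL S_inv subgroup.one_closed[OF sK] Kc topological_groupD(2)[OF tg]
    by (intro flow_subtopology flow_subgroup flow_coset_action[OF tg sg oH fin])
       (auto simp: S_def)
  then show ?thesis
    using SL by (simp add: S_def Int_absorb1)
qed

lemma extremely_amenable_fixes_l_cosets:
  fixes G :: "'g monoid" (structure)
  assumes tg: "topological_group G T" and sg: "subgroup H G" and oH: "openin T H"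
    and fin: "finite (left_cosets G H)"
    and ea: "extremely_amenable TYPE('g set) G T H"
    and b: "b \<in> carrier G" and h: "h \<in> H"
  shows "h <# (b <# H) = b <# H"
proof -
  interpret group G using topological_groupD[OF tg] by simp
  have Hc: "H \<subseteq> carrier G" by (rule subgroup.subset[OF sg])
  have bH: "b <# H \<in> left_cosets G H"
    using b by (auto simp: left_cosets_def)
  obtain C0 where "C0 \<in> (\<lambda>k. k <# (b <# H)) ` H" "\<forall>h\<in>H. coset_action G h C0 = C0"
    using ea flow_l_coset_orbit[OF tg sg oH fin sg bH]
    unfolding extremely_amenable_def by force
  then obtain k where k: "k \<in> H"
    "\<forall>h\<in>H. coset_action G h (coset_action G k (b <# H)) = coset_action G k (b <# H)"
    by (auto simp: coset_action_def)
  have "\<forall>h\<in>carrier (G\<lparr>carrier := H\<rparr>). coset_action G h (b <# H) = b <# H"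
  proof (rule flow_fixed_point_translate)
    show "flow (G\<lparr>carrier := H\<rparr>) (subtopology T H) (discrete_topology (left_cosets G H))
            (coset_action G)"
      by (rule flow_subgroup[OF flow_coset_action[OF tg sg oH fin] Hc])
    show "group (G\<lparr>carrier := H\<rparr>)"
      by (rule subgroup.subgroup_is_group[OF sg is_group])
    show "b <# H \<in> topspace (discrete_topology (left_cosets G H))"
      using bH by simp
    show "k \<in> carrier (G\<lparr>carrier := H\<rparr>)"
      using k(1) by simp
    show "\<forall>h\<in>carrier (G\<lparr>carrier := H\<rparr>).
            coset_action G h (coset_action G k (b <# H)) = coset_action G k (b <# H)"
      using k(2) by simp
  qed
  then show ?thesis
    using h by (simp add: coset_action_def)
qed

lemma normal_if_extremely_amenable:
  fixes G :: "'g monoid" (structure)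
  assumes tg: "topological_group G T" and sg: "subgroup H G" and oH: "openin T H"
    and fin: "finite (left_cosets G H)"
    and ea: "extremely_amenable TYPE('g set) G T H"
  shows "H \<lhd> G"
proof -
  interpret group G using topological_groupD[OF tg] by simp
  have Hc: "H \<subseteq> carrier G" by (rule subgroup.subset[OF sg])
  have "inv b \<otimes> (h \<otimes> b) \<in> H" if b: "b \<in> carrier G" and h: "h \<in> H" for b h
  proof -
    have "(h \<otimes> b) <# H = h <# (b <# H)"
      using lcos_m_assoc[OF Hc subsetD[OF Hc h] b] by simp
    also have "\<dots> = b <# H"
      by (rule extremely_amenable_fixes_l_cosets[OF assms b h])
    finally show ?thesis
      using l_coset_eq_iff[OF sg] h b Hc by (metis m_closed subsetD)
  qed
  then have "x \<otimes> h \<otimes> inv x \<in> H" if "x \<in> carrier G" "h \<in> H" for x h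
    using that Hc by (metis inv_closed inv_inv m_assoc subsetD)
  then show ?thesis
    using sg by (simp add: normal_inv_iff)
qed

lemma minimal_flow_finite_orbit:
  assumes "monoid G" "minimal_flow G T Y act" "y \<in> topspace Y"
    and "finite ((\<lambda>g. act g y) ` carrier G)"
  shows "(\<lambda>g. act g y) ` carrier G = topspace Y"
proof -
  let ?O = "(\<lambda>g. act g y) ` carrier G"
  have fl: "flow G T Y act" using assms(2) by (simp add: minimal_flow_def)
  have "?O \<subseteq> topspace Y" using fl assms(3) by (auto simp: flow_def)
  moreover have "t1_space Y"
    using fl by (simp add: flow_def Hausdorff_imp_t1_space)
  ultimately have closed: "closedin Y ?O"
    using assms(4) t1_space_closedin_finite by blast
  have invariant: "act g z \<in> ?O" if g: "g \<in> carrier G" and z: "z \<in> ?O" for g z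
  proof -
    obtain a where a: "a \<in> carrier G" "z = act a y" using z by blast
    then have "act g z = act (g \<otimes>\<^bsub>G\<^esub> a) y"
      using fl assms(3) g by (simp add: flow_def)
    then show ?thesis
      using a(1) g assms(1) by (simp add: monoid.m_closed)
  qed
  have nonempty: "?O \<noteq> {}" using assms(1) monoid.one_closed by blast
  have "Z = topspace Y"
    if "closedin Y Z" "Z \<noteq> {}" "\<forall>g\<in>carrier G. \<forall>z\<in>Z. act g z \<in> Z" for Z
    using assms(2) that by (simp add: minimal_flow_def)
  then show ?thesis
    using closed nonempty invariant by blast
qed

lemma flow_epi_coset_action_onto_minimal:
  fixes G :: "'g monoid" (structure)
  assumes "group G" and sg: "subgroup H G" and fin: "finite (left_cosets G H)"
    and mY: "minimal_flow G T Y act" and y0: "y0 \<in> topspace Y" "\<forall>h\<in>H. act h y0 = y0"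
  shows "\<exists>f. flow_epi G (discrete_topology (left_cosets G H)) (coset_action G) Y act f"
proof -
  interpret group G by fact
  have act_mult: "act (g \<otimes> h) y0 = act g (act h y0)" if "g \<in> carrier G" "h \<in> carrier G" for g h
    using mY y0 that unfolding minimal_flow_def flow_def by blast
  define f where "f C = act (SOME a. a \<in> carrier G \<and> C = a <# H) y0" for C
  have f_l_coset: "f (a <# H) = act a y0" if a: "a \<in> carrier G" for a
  proof -
    define c where "c = (SOME c. c \<in> carrier G \<and> a <# H = c <# H)"
    have c: "c \<in> carrier G" "a <# H = c <# H"
      unfolding c_def by (rule someI2[of _ a]; use a in simp)+
    then have "inv c \<otimes> a \<in> H" using l_coset_eq_iff[OF sg c(1) a] by simp
    then have "act a y0 = act c y0"
      using act_mult[of c "inv c \<otimes> a"] y0 a c by (simp add: m_assoc[symmetric])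
    then show ?thesis unfolding f_def c_def by simp
  qed
  have image: "f ` left_cosets G H = (\<lambda>g. act g y0) ` carrier G"
    using f_l_coset by (auto simp: left_cosets_def image_image)
  have "flow_epi G (discrete_topology (left_cosets G H)) (coset_action G) Y act f"
    unfolding flow_epi_def
  proof (intro conjI ballI)
    have "finite ((\<lambda>g. act g y0) ` carrier G)"
      using fin image finite_imageI by metis
    then show "f ` topspace (discrete_topology (left_cosets G H)) = topspace Y"
      using minimal_flow_finite_orbit[OF monoid_axioms mY y0(1)] image by simp
    then show "continuous_map (discrete_topology (left_cosets G H)) Y f" by auto
    fix g C assume "g \<in> carrier G" "C \<in> topspace (discrete_topology (left_cosets G H))"
    then show "f (coset_action G g C) = act g (f C)"
      using f_l_coset act_mult sg
      by (auto simp: left_cosets_def coset_action_def lcos_m_assoc subgroup.subset)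
  qed
  then show ?thesis by blast
qed

theorem mainTheorem6:
  fixes G :: "'g monoid" and T :: "'g topology" and H :: "'g set"
  assumes "topological_group G T"
    and "Hausdorff_space T"
    and "subgroup H G"
    and "closedin T H"
    and "finite (left_cosets G H)"
    and "extremely_amenable TYPE('g set) G T H"
    and "extremely_amenable TYPE('y) G T H"
  shows "H \<lhd> G \<and> openin T H \<and> closedin T H \<and>
         universal_minimal_flow TYPE('y) G T (coset_space G T H) (coset_action G)"
proof -
  note tg = assms(1) and sg = assms(3) and fin = assms(5)
  have oH: "openin T H"
    using openin_closed_subgroup_of_finite_index[OF tg sg assms(4) fin] .
  have univ: "\<exists>f. flow_epi G (discrete_topology (left_cosets G H)) (coset_action G) Y act f"
    if mY: "minimal_flow G T Y act" for Y :: "'y topology" and act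
  proof -
    have "flow (G\<lparr>carrier := H\<rparr>) (subtopology T H) Y act"
      using mY subgroup.subset[OF sg] by (simp add: minimal_flow_def flow_subgroup)
    then obtain y0 where "y0 \<in> topspace Y" "\<forall>h\<in>H. act h y0 = y0"
      using assms(7) unfolding extremely_amenable_def by blast
    then show ?thesis
      using flow_epi_coset_action_onto_minimal[OF topological_groupD(1)[OF tg] sg fin mY] by blast
  qed
  show ?thesis
    using normal_if_extremely_amenable[OF tg sg oH fin assms(6)] oH assms(4) univ
      minimal_flow_coset_action[OF tg sg oH fin]
    by (simp add: universal_minimal_flow_def coset_space_eq_discrete_topology[OF tg sg oH])
qed

end
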